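(* With the notation of the context, let $\beta^*=\inf_{x\in\Delta}F(x)$ and $\alpha^*=\inf_{x\in\Delta}G(x)$. Then $1<\beta^*\le\alpha^*\le\alpha_n$.
   Context: Fix an integer $n\ge2$ and free generators $\xi_1,\dots,\xi_n$ of a free group; throughout $i,j,k\in\{1,\dots,n\}$ and $t,s,p\in\{-1,+1\}$. Let $\Psi$ be the set of reduced words $\xi_i^{2t}$; $\xi_i^t\xi_j^{2s}$ ($i\ne j$); $\xi_i^t\xi_j^s\xi_k^p$ ($i\ne j$, $j\ne k$). For a letter $\xi_a^x$ let $S(\xi_a^x)\subset\Psi$ be the set of words in $\Psi$ beginning with $\xi_a^x$, namely $\{\xi_a^{2x}\}\cup\{\xi_a^x\xi_j^{2s}\}\cup\{\xi_a^x\xi_j^s\xi_k^p\}$; for $a\ne b$ let $S(\xi_a^x\xi_b^y)=\{\xi_a^x\xi_b^{2y}\}\cup\{\xi_a^x\xi_b^y\xi_k^p: k\ne b\}$. A relation $r$ is a pair $(\psi_r,\Psi_r)$ with $\psi_r\in\Psi$, $\Psi_r\subseteq\Psi$; the relations considered are (indices $i_0\ne j_0$, in type 5 $i_0,j_0,k_0$ pairwise distinct, all signs arbitrary): 1a: $\psi_r=\xi_{i_0}^{2t_0}$, $\Psi_r=\Psi\setminus S(\xi_{i_0}^{t_0})$; 1b: $\psi_r=\xi_{i_0}^{2t_0}$, $\Psi_r=\Psi\setminus\{\xi_{i_0}^{t_0}\xi_{j_0}^{s_0}\xi_{i_0}^{t_0}\}$; 2a: $\psi_r=\xi_{i_0}^{t_0}\xi_{j_0}^{2s_0}$,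 $\Psi_r=\Psi\setminus\{\xi_{j_0}^{2s_0}\}$; 2b: $\psi_r=\xi_{i_0}^{t_0}\xi_{j_0}^{2s_0}$, $\Psi_r=\Psi\setminus S(\xi_{i_0}^{t_0}\xi_{j_0}^{s_0})$; 3a: $\psi_r=\xi_{i_0}^{t_0}\xi_{j_0}^{s_0}\xi_{i_0}^{t_0}$, $\Psi_r=\Psi\setminus S(\xi_{j_0}^{s_0}\xi_{i_0}^{t_0})$; 3b: $\psi_r=\xi_{i_0}^{t_0}\xi_{j_0}^{s_0}\xi_{i_0}^{t_0}$, $\Psi_r=\Psi\setminus\{\xi_{i_0}^{2t_0}\}$; 4a: $\psi_r=\xi_{i_0}^{t_0}\xi_{j_0}^{s_0}\xi_{i_0}^{-t_0}$, $\Psi_r=\Psi\setminus S(\xi_{j_0}^{s_0}\xi_{i_0}^{-t_0})$; 4b: $\psi_r=\xi_{i_0}^{t_0}\xi_{j_0}^{s_0}\xi_{i_0}^{-t_0}$, $\Psi_r=S(\xi_{i_0}^{t_0})$; 5a: $\psi_r=\xi_{i_0}^{t_0}\xi_{j_0}^{s_0}\xi_{k_0}^{p_0}$, $\Psi_r=\Psi\setminus S(\xi_{j_0}^{s_0}\xi_{k_0}^{p_0})$; 5b: $\psi_r=\xi_{i_0}^{t_0}\xi_{j_0}^{s_0}\xi_{k_0}^{p_0}$, $\Psi_r=\Psi\setminus S(\xi_{i_0}^{t_0}\xi_{k_0}^{p_0})$. Let $\mathcal{G}$ be the collection of all these relations and $\mathcal{F}\subset\mathcal{G}$ those of types 1a,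 2b, 3a, 4b, 5a. Let $\Delta=\{x\in\mathbb{R}^\Psi: x(\psi)>0\ \forall\psi,\ \sum_{\psi}x(\psi)=1\}$. For a relation $r$ and $x\in\Delta$ put $x_r=x(\psi_r)$, $X_r=\sum_{\psi\in\Psi_r}x(\psi)$, $f_r(x)=\frac{1-x_r}{x_r}\cdot\frac{1-X_r}{X_r}$, $F(x)=\max_{r\in\mathcal{F}}f_r(x)$, $G(x)=\max_{r\in\mathcal{G}}f_r(x)$. The number $\alpha_n$ is the unique real root greater than $(2n-1)^2$ of $\mathcal{P}(\lambda)=(8n^3-12n^2+2n+1)\lambda^4+(-64n^6+192n^5-192n^4+64n^3+4n^2+2n-4)\lambda^3+(-96n^5+224n^4-168n^3+52n^2-18n+6)\lambda^2+(32n^5-112n^4+128n^3-68n^2+22n-4)\lambda+16n^4-32n^3+24n^2-8n+1.$ *)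

theory Defs
  imports Complex_Main
begin

text \<open>A letter xi_i^t is the pair (i,t) with i in {1..n} and t in {-1,1};
  a (reduced) word is the list of its letters.\<close>

type_synonym letter = "nat \<times> int"
type_synonym word = "letter list"

definition sgns :: "int set" where "sgns = {-1, 1}"

definition Psi :: "nat \<Rightarrow> word set" where
  "Psi n =
     {[(i,t),(i,t)] | i t. i \<in> {1..n} \<and> t \<in> sgns}
   \<union> {[(i,t),(j,s),(j,s)] | i t j s. i \<in> {1..n} \<and> j \<in> {1..n} \<and> t \<in> sgns \<and> s \<in> sgns \<and> i \<noteq> j}
   \<union> {[(i,t),(j,s),(k,p)] | i t j s k p. i \<in> {1..n} \<and> j \<in> {1..n} \<and> k \<in> {1..n}
        \<and> t \<in> sgns \<and> s \<in> sgns \<and> p \<in> sgns \<and> i \<noteq> j \<and> j \<noteq> k}"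

text \<open>S(xi_a^x): words of Psi beginning with the letter xi_a^x.\<close>
definition S1 :: "nat \<Rightarrow> nat \<Rightarrow> int \<Rightarrow> word set" where
  "S1 n a x =
     {[(a,x),(a,x)]}
   \<union> {[(a,x),(j,s),(j,s)] | j s. j \<in> {1..n} \<and> s \<in> sgns \<and> j \<noteq> a}
   \<union> {[(a,x),(j,s),(k,p)] | j s k p. j \<in> {1..n} \<and> k \<in> {1..n} \<and> s \<in> sgns \<and> p \<in> sgns
        \<and> a \<noteq> j \<and> j \<noteq> k}"

definition S2 :: "nat \<Rightarrow> nat \<Rightarrow> int \<Rightarrow> nat \<Rightarrow> int \<Rightarrow> word set" where
  "S2 n a x b y =
     {[(a,x),(b,y),(b,y)]}
   \<union> {[(a,x),(b,y),(k,p)] | k p. k \<in> {1..n} \<and> p \<in> sgns \<and> k \<noteq> b}"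

type_synonym relation = "word \<times> word set"

abbreviation idx :: "nat \<Rightarrow> nat set" where "idx n \<equiv> {1..n}"

definition R1a :: "nat \<Rightarrow> relation set" where
  "R1a n = {([(i,t),(i,t)], Psi n - S1 n i t) | i t. i \<in> idx n \<and> t \<in> sgns}"
definition R1b :: "nat \<Rightarrow> relation set" where
  "R1b n = {([(i,t),(i,t)], Psi n - {[(i,t),(j,s),(i,t)]}) | i j t s.
      i \<in> idx n \<and> j \<in> idx n \<and> i \<noteq> j \<and> t \<in> sgns \<and> s \<in> sgns}"
definition R2a :: "nat \<Rightarrow> relation set" where
  "R2a n = {([(i,t),(j,s),(j,s)], Psi n - {[(j,s),(j,s)]}) | i j t s.
      i \<in> idx n \<and> j \<in> idx n \<and> i \<noteq> j \<and> t \<in> sgns \<and> s \<in> sgns}"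
definition R2b :: "nat \<Rightarrow> relation set" where
  "R2b n = {([(i,t),(j,s),(j,s)], Psi n - S2 n i t j s) | i j t s.
      i \<in> idx n \<and> j \<in> idx n \<and> i \<noteq> j \<and> t \<in> sgns \<and> s \<in> sgns}"
definition R3a :: "nat \<Rightarrow> relation set" where
  "R3a n = {([(i,t),(j,s),(i,t)], Psi n - S2 n j s i t) | i j t s.
      i \<in> idx n \<and> j \<in> idx n \<and> i \<noteq> j \<and> t \<in> sgns \<and> s \<in> sgns}"
definition R3b :: "nat \<Rightarrow> relation set" where
  "R3b n = {([(i,t),(j,s),(i,t)], Psi n - {[(i,t),(i,t)]}) | i j t s.
      i \<in> idx n \<and> j \<in> idx n \<and> i \<noteq> j \<and> t \<in> sgns \<and> s \<in> sgns}"
definition R4a :: "nat \<Rightarrow> relation set" where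
  "R4a n = {([(i,t),(j,s),(i,-t)], Psi n - S2 n j s i (-t)) | i j t s.
      i \<in> idx n \<and> j \<in> idx n \<and> i \<noteq> j \<and> t \<in> sgns \<and> s \<in> sgns}"
definition R4b :: "nat \<Rightarrow> relation set" where
  "R4b n = {([(i,t),(j,s),(i,-t)], S1 n i t) | i j t s.
      i \<in> idx n \<and> j \<in> idx n \<and> i \<noteq> j \<and> t \<in> sgns \<and> s \<in> sgns}"
definition R5a :: "nat \<Rightarrow> relation set" where
  "R5a n = {([(i,t),(j,s),(k,p)], Psi n - S2 n j s k p) | i j k t s p.
      i \<in> idx n \<and> j \<in> idx n \<and> k \<in> idx n \<and> i \<noteq> j \<and> j \<noteq> k \<and> i \<noteq> k
      \<and> t \<in> sgns \<and> s \<in> sgns \<and> p \<in> sgns}"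
definition R5b :: "nat \<Rightarrow> relation set" where
  "R5b n = {([(i,t),(j,s),(k,p)], Psi n - S2 n i t k p) | i j k t s p.
      i \<in> idx n \<and> j \<in> idx n \<and> k \<in> idx n \<and> i \<noteq> j \<and> j \<noteq> k \<and> i \<noteq> k
      \<and> t \<in> sgns \<and> s \<in> sgns \<and> p \<in> sgns}"

definition relsG :: "nat \<Rightarrow> relation set" where
  "relsG n = R1a n \<union> R1b n \<union> R2a n \<union> R2b n \<union> R3a n \<union> R3b n \<union> R4a n \<union> R4b n \<union> R5a n \<union> R5b n"

definition relsF :: "nat \<Rightarrow> relation set" where
  "relsF n = R1a n \<union> R2b n \<union> R3a n \<union> R4b n \<union> R5a n"

text \<open>The open simplex on Psi (values off Psi are irrelevant).\<close>
definition Delta :: "nat \<Rightarrow> (word \<Rightarrow> real) set" where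
  "Delta n = {x. (\<forall>\<psi>\<in>Psi n. x \<psi> > 0) \<and> (\<Sum>\<psi>\<in>Psi n. x \<psi>) = 1}"

definition frel :: "relation \<Rightarrow> (word \<Rightarrow> real) \<Rightarrow> real" where
  "frel r x = (let xr = x (fst r); Xr = (\<Sum>\<psi>\<in>snd r. x \<psi>)
               in (1 - xr) / xr * ((1 - Xr) / Xr))"

definition Ffun :: "nat \<Rightarrow> (word \<Rightarrow> real) \<Rightarrow> real" where
  "Ffun n x = Max ((\<lambda>r. frel r x) ` relsF n)"

definition Gfun :: "nat \<Rightarrow> (word \<Rightarrow> real) \<Rightarrow> real" where
  "Gfun n x = Max ((\<lambda>r. frel r x) ` relsG n)"

definition Ppoly :: "nat \<Rightarrow> real \<Rightarrow> real" where
  "Ppoly n l = (let m = real n in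
      (8*m^3 - 12*m^2 + 2*m + 1) * l^4
    + (-64*m^6 + 192*m^5 - 192*m^4 + 64*m^3 + 4*m^2 + 2*m - 4) * l^3
    + (-96*m^5 + 224*m^4 - 168*m^3 + 52*m^2 - 18*m + 6) * l^2
    + (32*m^5 - 112*m^4 + 128*m^3 - 68*m^2 + 22*m - 4) * l
    + 16*m^4 - 32*m^3 + 24*m^2 - 8*m + 1)"

definition alpha :: "nat \<Rightarrow> real" where
  "alpha n = (THE l. l > (2 * real n - 1)^2 \<and> Ppoly n l = 0)"

end

theory Submission
  imports Defs
begin

(* Write f_r(x) = g(x_r) g(X_r) with g(y) = (1 - y)/y.

Lower bound: for a letter xi_1^t the relations of types 1a and 4b with relators xi_1^(2t) and
xi_1^t xi_2 xi_1^(-t) have complementary sets Psi_r, namely Psi - S(xi_1^t) and S(xi_1^t).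
If both f_r are below 3/2, the two relators carry mass more than 2/3. Doing this for t = 1 and
t = -1 produces four distinct words of total mass more than 4/3, impossible on the simplex;
so F >= 3/2 everywhere.

Upper bound: evaluate G at a point invariant under all permutations and inversions of the
generators, with mass a on each xi_i^(2t), e on each xi_i^t xi_j^s xi_i^(-t) and q on every
other word of length 3. For a target value lambda, a and e are chosen to make the relations of
types 1a and 4b tight, q to make type 2b tight, and the total mass must be 1. These conditions
are consistent exactly when P(lambda) = 0, and since g is decreasing all other relation types are
then dominated by the tight ones. So G <= alpha_n at this point. The root alpha_n exists by a
sign change of P on [(2n-1)^2, 8n^3] and is unique because P(lambda)/lambda^3 is increasing on
[(2n-1)^2, oo). *)

section \<open>The words of Psi\<close>

lemma finite_sgns [simp]: "finite sgns"
  by (simp add: sgns_def)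

lemma card_sgns [simp]: "card sgns = 2"
  by (simp add: sgns_def)

lemma uminus_sgns [simp]: "t \<in> sgns \<Longrightarrow> - t \<in> sgns"
  by (auto simp: sgns_def)

lemma zero_notin_sgns [simp]: "0 \<notin> sgns"
  by (simp add: sgns_def)

lemma finite_Psi [simp]: "finite (Psi n)"
proof (rule finite_subset)
  show "Psi n \<subseteq> {w. set w \<subseteq> idx n \<times> sgns \<and> length w \<le> 3}"
    unfolding Psi_def by auto
qed (simp add: finite_lists_length_le)

lemma square_in_Psi: "i \<in> idx n \<Longrightarrow> t \<in> sgns \<Longrightarrow> [(i,t),(i,t)] \<in> Psi n"
  unfolding Psi_def by blast

lemma letter_square_in_Psi:
  "\<lbrakk>i \<in> idx n; j \<in> idx n; t \<in> sgns; s \<in> sgns; i \<noteq> j\<rbrakk> \<Longrightarrow> [(i,t),(j,s),(j,s)] \<in> Psi n"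
  unfolding Psi_def by blast

lemma triple_in_Psi:
  "\<lbrakk>i \<in> idx n; j \<in> idx n; k \<in> idx n; t \<in> sgns; s \<in> sgns; p \<in> sgns; i \<noteq> j; j \<noteq> k\<rbrakk>
   \<Longrightarrow> [(i,t),(j,s),(k,p)] \<in> Psi n"
  unfolding Psi_def by blast

lemma S1_subset_Psi: "i \<in> idx n \<Longrightarrow> t \<in> sgns \<Longrightarrow> S1 n i t \<subseteq> Psi n"
  unfolding S1_def Psi_def by auto

lemma S2_subset_Psi:
  "\<lbrakk>i \<in> idx n; j \<in> idx n; t \<in> sgns; s \<in> sgns; i \<noteq> j\<rbrakk> \<Longrightarrow> S2 n i t j s \<subseteq> Psi n"
  unfolding S2_def Psi_def by auto

lemma Psi_eq_UN_S1: "Psi n = (\<Union>(i, t)\<in>idx n \<times> sgns. S1 n i t)"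
  unfolding S1_def Psi_def by auto

lemma S1_eq_UN_S2:
  "S1 n i t = insert [(i,t),(i,t)] (\<Union>(j, s)\<in>(idx n - {i}) \<times> sgns. S2 n i t j s)"
  unfolding S1_def S2_def by fastforce

lemma S2_eq:
  "S2 n i t j s = insert [(i,t),(j,s),(j,s)] ((\<lambda>l. [(i,t),(j,s),l]) ` ((idx n - {j}) \<times> sgns))"
  unfolding S2_def by auto

lemma finite_S2 [simp]: "finite (S2 n i t j s)"
  unfolding S2_eq by simp

lemma finite_S1 [simp]: "finite (S1 n i t)"
  unfolding S1_eq_UN_S2 by auto

lemma sum_Psi: "sum x (Psi n) = (\<Sum>(i, t)\<in>idx n \<times> sgns. sum x (S1 n i t))"
  unfolding Psi_eq_UN_S1
  by (subst sum.UNION_disjoint) (auto simp: split_def, auto simp: S1_def)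

lemma sum_S1:
  "sum x (S1 n i t) = x [(i,t),(i,t)] + (\<Sum>(j, s)\<in>(idx n - {i}) \<times> sgns. sum x (S2 n i t j s))"
proof -
  have "sum x (\<Union>(j, s)\<in>(idx n - {i}) \<times> sgns. S2 n i t j s)
      = (\<Sum>(j, s)\<in>(idx n - {i}) \<times> sgns. sum x (S2 n i t j s))"
    by (subst sum.UNION_disjoint) (auto simp: split_def, auto simp: S2_def)
  moreover have "[(i,t),(i,t)] \<notin> (\<Union>(j, s)\<in>(idx n - {i}) \<times> sgns. S2 n i t j s)"
    by (auto simp: S2_def)
  ultimately show ?thesis
    unfolding S1_eq_UN_S2[of n i t] by simp
qed

lemma sum_S2:
  "sum x (S2 n i t j s) = x [(i,t),(j,s),(j,s)] + (\<Sum>l\<in>(idx n - {j}) \<times> sgns. x [(i,t),(j,s),l])"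
proof -
  have "inj_on (\<lambda>l. [(i,t),(j,s),l]) ((idx n - {j}) \<times> sgns)"
    by (auto simp: inj_on_def)
  moreover have "[(i,t),(j,s),(j,s)] \<notin> (\<lambda>l. [(i,t),(j,s),l]) ` ((idx n - {j}) \<times> sgns)"
    by auto
  ultimately show ?thesis
    unfolding S2_eq by (simp add: sum.reindex)
qed

section \<open>Relations and the lower bound\<close>

lemma relsG_subset: "relsG n \<subseteq> Psi n \<times> Pow (Psi n)"
  unfolding relsG_def R1a_def R1b_def R2a_def R2b_def R3a_def R3b_def R4a_def R4b_def R5a_def
    R5b_def
  by (auto intro: square_in_Psi letter_square_in_Psi triple_in_Psi S1_subset_Psi[THEN subsetD])

lemma finite_relsG [simp]: "finite (relsG n)"
  by (rule finite_subset[OF relsG_subset]) simp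

lemma relsF_subset_relsG: "relsF n \<subseteq> relsG n"
  unfolding relsF_def relsG_def by blast

lemma finite_relsF [simp]: "finite (relsF n)"
  using finite_subset[OF relsF_subset_relsG] by simp

lemma R1a_in_relsF: "\<lbrakk>i \<in> idx n; t \<in> sgns\<rbrakk> \<Longrightarrow> ([(i,t),(i,t)], Psi n - S1 n i t) \<in> relsF n"
  unfolding relsF_def R1a_def by blast

lemma R4b_in_relsF:
  "\<lbrakk>i \<in> idx n; j \<in> idx n; i \<noteq> j; t \<in> sgns; s \<in> sgns\<rbrakk> \<Longrightarrow> ([(i,t),(j,s),(i,-t)], S1 n i t) \<in> relsF n"
  unfolding relsF_def R4b_def by blast

lemma frel_le_Ffun: "r \<in> relsF n \<Longrightarrow> frel r x \<le> Ffun n x"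
  unfolding Ffun_def by simp

lemma relsF_nonempty:
  assumes "n \<ge> 1"
  shows "relsF n \<noteq> {}"
proof -
  have "([(1,1),(1,1)], Psi n - S1 n 1 1) \<in> relsF n"
    using assms by (intro R1a_in_relsF) (auto simp: sgns_def)
  then show ?thesis
    by blast
qed

lemma Ffun_le_Gfun: "n \<ge> 1 \<Longrightarrow> Ffun n x \<le> Gfun n x"
  unfolding Ffun_def Gfun_def using relsF_nonempty[of n]
  by (intro Max_mono image_mono relsF_subset_relsG) auto

definition odds_against :: "real \<Rightarrow> real" where
  "odds_against y = (1 - y) / y"

lemma frel_eq: "frel (w, S) x = odds_against (x w) * odds_against (sum x S)"
  by (simp add: frel_def odds_against_def Let_def)

lemma odds_against_le_iff: "0 < y \<Longrightarrow> 0 < z \<Longrightarrow> odds_against y \<le> odds_against z \<longleftrightarrow> z \<le> y"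
  by (simp add: odds_against_def divide_simps) (simp add: algebra_simps)

lemma odds_against_nonneg: "0 < y \<Longrightarrow> y \<le> 1 \<Longrightarrow> 0 \<le> odds_against y"
  by (simp add: odds_against_def)

lemma sum_Delta_pos: "\<lbrakk>x \<in> Delta n; S \<subseteq> Psi n; w \<in> S\<rbrakk> \<Longrightarrow> 0 < sum x S"
  unfolding Delta_def by (intro sum_pos2[of S w]) (auto intro: finite_subset less_imp_le)

lemma sum_Delta_le_1: "\<lbrakk>x \<in> Delta n; S \<subseteq> Psi n\<rbrakk> \<Longrightarrow> sum x S \<le> 1"
proof -
  assume "x \<in> Delta n" "S \<subseteq> Psi n"
  then have "sum x S \<le> sum x (Psi n)"
    unfolding Delta_def by (intro sum_mono2) (auto intro: less_imp_le)
  with \<open>x \<in> Delta n\<close> show ?thesis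
    unfolding Delta_def by simp
qed

lemma sum_Diff_of_sum_Psi:
  fixes x :: "word \<Rightarrow> real"
  assumes "sum x (Psi n) = 1" "S \<subseteq> Psi n"
  shows "sum x (Psi n - S) = 1 - sum x S"
  using sum_diff[OF finite_Psi assms(2), of x] assms(1) by simp

lemma odds_against_mult_lt_imp:
  fixes u X c :: real
  assumes "0 < u" "0 < X" "X \<le> 1" "1 \<le> c" "odds_against u * odds_against X < c"
  shows "1 - u - X < (c - 1) * u"
proof -
  have "(1 - u) * (1 - X) < c * u * X"
    using assms by (simp add: odds_against_def field_simps)
  then have "1 - u - X < (c - 1) * (u * X)"
    by (simp add: algebra_simps)
  also have "\<dots> \<le> (c - 1) * u"
    using assms by (intro mult_left_mono) (auto simp: mult_left_le)
  finally show ?thesis .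
qed

lemma relator_pair_mass_gt:
  assumes x: "x \<in> Delta n" and ij: "i \<in> idx n" "j \<in> idx n" "i \<noteq> j" and ts: "t \<in> sgns" "s \<in> sgns"
    and small: "frel ([(i,t),(i,t)], Psi n - S1 n i t) x < 3/2"
      "frel ([(i,t),(j,s),(i,-t)], S1 n i t) x < 3/2"
  shows "2/3 < x [(i,t),(i,t)] + x [(i,t),(j,s),(i,-t)]"
proof -
  let ?u = "x [(i,t),(i,t)]" and ?v = "x [(i,t),(j,s),(i,-t)]" and ?s = "sum x (S1 n i t)"
  have S1: "S1 n i t \<subseteq> Psi n" and sq: "[(i,t),(i,t)] \<in> S1 n i t"
    using S1_subset_Psi ij ts by (auto simp: S1_def)
  have sq_other: "[(j,s),(j,s)] \<in> Psi n - S1 n i t"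
    using square_in_Psi ij ts by (auto simp: S1_def)
  have compl: "sum x (Psi n - S1 n i t) = 1 - ?s"
    using x by (intro sum_Diff_of_sum_Psi S1) (simp add: Delta_def)
  have "[(i,t),(j,s),(i,-t)] \<in> Psi n"
    using ij ts by (intro triple_in_Psi) auto
  then have pos: "0 < ?u" "0 < ?v" "0 < ?s" "0 < 1 - ?s"
    using x S1 sq sum_Delta_pos[OF x _ sq_other] sum_Delta_pos[OF x S1 sq] compl
    by (auto simp: Delta_def)
  from small(1) have "odds_against ?u * odds_against (1 - ?s) < 3/2"
    using compl by (simp add: frel_eq)
  from odds_against_mult_lt_imp[OF pos(1) pos(4) _ _ this]
  have u: "1 - ?u - (1 - ?s) < ?u / 2"
    using pos by simp
  from small(2) have "odds_against ?v * odds_against ?s < 3/2"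
    by (simp add: frel_eq)
  from odds_against_mult_lt_imp[OF pos(2) pos(3) _ _ this]
  have v: "1 - ?v - ?s < ?v / 2"
    using pos by simp
  from u v show ?thesis
    by linarith
qed

lemma Ffun_ge_three_halves:
  assumes n: "n \<ge> 2" and x: "x \<in> Delta n"
  shows "3/2 \<le> Ffun n x"
proof (rule ccontr)
  assume "\<not> 3/2 \<le> Ffun n x"
  then have small: "frel r x < 3/2" if "r \<in> relsF n" for r
    using frel_le_Ffun[OF that, of x] by linarith
  have idx: "1 \<in> idx n" "2 \<in> idx n"
    using n by auto
  have heavy: "2/3 < x [(1,t),(1,t)] + x [(1,t),(2,1),(1,-t)]" if "t \<in> sgns" for t
    using idx that
    by (intro relator_pair_mass_gt[OF x] small R1a_in_relsF R4b_in_relsF) (auto simp: sgns_def)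
  let ?W = "{[(1,1),(1,1)], [(1,1),(2,1),(1,-1)], [(1,-1),(1,-1)], [(1,-1),(2,1),(1,1)]}"
  have "?W \<subseteq> Psi n"
    using idx by (auto simp: sgns_def intro!: square_in_Psi triple_in_Psi)
  then have "sum x ?W \<le> 1"
    by (rule sum_Delta_le_1[OF x])
  moreover have "4/3 < sum x ?W"
    using heavy[of 1] heavy[of "-1"] by (simp add: sgns_def)
  ultimately show False
    by linarith
qed

section \<open>The symmetric point\<close>

definition sym_point :: "real \<Rightarrow> real \<Rightarrow> real \<Rightarrow> word \<Rightarrow> real" where
  "sym_point a e q w =
     (if length w = 2 then a else if w ! 2 = (fst (w ! 0), - snd (w ! 0)) then e else q)"

lemma sym_point_Cons_Cons [simp]:
  "sym_point a e q [u, v] = a"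
  "sym_point a e q [u, v, w] = (if w = (fst u, - snd u) then e else q)"
  by (simp_all add: sym_point_def)

lemma sum_S2_sym_point:
  assumes "i \<in> idx n" "j \<in> idx n" "i \<noteq> j" "t \<in> sgns"
  shows "sum (sym_point a e q) (S2 n i t j s) = e + 2 * (real n - 1) * q"
proof -
  let ?L = "(idx n - {j}) \<times> sgns"
  have inv: "(i, -t) \<in> ?L"
    using assms by auto
  have "(\<Sum>l\<in>?L. sym_point a e q [(i,t),(j,s),l]) = (\<Sum>l\<in>?L. q + (if l = (i,-t) then e - q else 0))"
    by (rule sum.cong) auto
  also have "\<dots> = 2 * (real n - 1) * q + (e - q)"
    using inv assms(2) by (simp add: sum.distrib card_cartesian_product)
  finally show ?thesis
    using assms by (simp add: sum_S2 algebra_simps)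
qed

lemma sum_S1_sym_point:
  assumes "i \<in> idx n" "t \<in> sgns"
  shows "sum (sym_point a e q) (S1 n i t) = a + 2 * (real n - 1) * (e + 2 * (real n - 1) * q)"
proof -
  have "(\<Sum>(j, s)\<in>(idx n - {i}) \<times> sgns. sum (sym_point a e q) (S2 n i t j s))
      = (\<Sum>(j, s)\<in>(idx n - {i}) \<times> sgns. e + 2 * (real n - 1) * q)"
    using assms sum_S2_sym_point[of i n _ t a e q] by (intro sum.cong) fastforce+
  then show ?thesis
    using assms(1) by (simp add: sum_S1 split_def)
qed

lemma sum_Psi_sym_point:
  "sum (sym_point a e q) (Psi n) = 2 * real n * (a + 2 * (real n - 1) * (e + 2 * (real n - 1) * q))"
proof -
  have "sum (sym_point a e q) (Psi n)
      = (\<Sum>(i, t)\<in>idx n \<times> sgns. a + 2 * (real n - 1) * (e + 2 * (real n - 1) * q))"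
    unfolding sum_Psi by (intro sum.cong) (auto simp: sum_S1_sym_point)
  then show ?thesis
    by (simp add: split_def card_cartesian_product)
qed

lemma frel_sym_point:
  fixes n :: nat and a e q :: real
  defines "W \<equiv> e + 2 * (real n - 1) * q"
  assumes n: "n \<ge> 1" and total: "a + 2 * (real n - 1) * W = 1 / (2 * real n)"
    and r: "r \<in> relsG n"
  shows "frel r (sym_point a e q) \<in>
    {odds_against a * odds_against (1 - 1 / (2 * real n)), odds_against a * odds_against (1 - q),
     odds_against q * odds_against (1 - a), odds_against q * odds_against (1 - W),
     odds_against e * odds_against (1 - W), odds_against e * odds_against (1 / (2 * real n))}"
proof -
  let ?x = "sym_point a e q"
  have tot: "sum ?x (Psi n) = 1"
    using n total by (simp add: sum_Psi_sym_point W_def)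
  have S1: "sum ?x (S1 n i t) = 1 / (2 * real n)" if "i \<in> idx n" "t \<in> sgns" for i t
    using sum_S1_sym_point[OF that] total by (simp add: W_def)
  have S1c: "sum ?x (Psi n - S1 n i t) = 1 - 1 / (2 * real n)" if "i \<in> idx n" "t \<in> sgns" for i t
    using sum_Diff_of_sum_Psi[OF tot S1_subset_Psi[OF that]] S1[OF that] by simp
  have S2c: "sum ?x (Psi n - S2 n i t j s) = 1 - W"
    if "i \<in> idx n" "j \<in> idx n" "t \<in> sgns" "s \<in> sgns" "i \<noteq> j" for i j t s
    using sum_Diff_of_sum_Psi[OF tot S2_subset_Psi[OF that]] sum_S2_sym_point[of i n j t a e q s] that
    by (simp add: W_def)
  have single: "sum ?x (Psi n - {w}) = 1 - ?x w" if "w \<in> Psi n" for w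
    using sum_Diff_of_sum_Psi[OF tot, of "{w}"] that by simp
  from r consider "r \<in> R1a n" | "r \<in> R1b n" | "r \<in> R2a n" | "r \<in> R2b n" | "r \<in> R3a n"
    | "r \<in> R3b n" | "r \<in> R4a n" | "r \<in> R4b n" | "r \<in> R5a n" | "r \<in> R5b n"
    unfolding relsG_def by blast
  then show ?thesis
    by cases (auto simp: R1a_def R1b_def R2a_def R2b_def R3a_def R3b_def R4a_def R4b_def R5a_def
      R5b_def frel_eq S1 S1c S2c single square_in_Psi triple_in_Psi)
qed

lemma odds_against_reciprocal_2n:
  assumes "n \<ge> 1"
  shows "odds_against (1 - 1 / (2 * real n)) = 1 / (2 * real n - 1)"
    and "odds_against (1 / (2 * real n)) = 2 * real n - 1"
  using assms by (simp_all add: odds_against_def field_simps)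

lemma sym_point_mass_bounds:
  fixes n :: nat and a e q :: real
  defines "W \<equiv> e + 2 * (real n - 1) * q"
  assumes n: "n \<ge> 2" and pos: "0 < a" "0 < e" "0 < q"
    and total: "a + 2 * (real n - 1) * W = 1 / (2 * real n)"
  shows "q \<le> W" and "e \<le> W" and "W \<le> 1 / (2 * real n)"
proof -
  have k: "1 \<le> 2 * (real n - 1)"
    using n by simp
  have "q \<le> 2 * (real n - 1) * q"
    using k pos by simp
  then show q_le_W: "q \<le> W" and "e \<le> W"
    using pos unfolding W_def by linarith+
  have "W \<le> 2 * (real n - 1) * W"
    using k pos q_le_W by simp
  then show "W \<le> 1 / (2 * real n)"
    using total pos by linarith
qed

lemma odds_against_products_le:
  fixes n :: nat and a e q lam :: real
  defines "W \<equiv> e + 2 * (real n - 1) * q"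
  assumes n: "n \<ge> 2" and pos: "0 < a" "0 < e" "0 < q"
    and total: "a + 2 * (real n - 1) * W = 1 / (2 * real n)"
    and eq_a: "odds_against a * odds_against (1 - 1 / (2 * real n)) = lam"
    and eq_e: "odds_against e * odds_against (1 / (2 * real n)) = lam"
    and eq_q: "odds_against q * odds_against (1 - W) = lam"
  shows "odds_against a * odds_against (1 - q) \<le> lam"
    and "odds_against q * odds_against (1 - a) \<le> lam"
    and "odds_against e * odds_against (1 - W) \<le> lam"
proof -
  note W = sym_point_mass_bounds[OF n pos total[unfolded W_def], folded W_def]
  have small: "1 / (2 * real n) \<le> 1/4"
    using n by (simp add: field_simps)
  have lam: "0 \<le> lam"
    unfolding eq_q[symmetric] using pos W small by (intro mult_nonneg_nonneg odds_against_nonneg) auto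
  have vals: "odds_against (1 - 1 / (2 * real n)) = 1 / (2 * real n - 1)"
    "odds_against (1 / (2 * real n)) = 2 * real n - 1"
    using odds_against_reciprocal_2n[of n] n by simp_all
  have "odds_against a = (2 * real n - 1) * lam" and "odds_against e = lam / (2 * real n - 1)"
    using eq_a[unfolded vals] eq_e[unfolded vals] n by (simp_all add: field_simps)
  moreover have "lam / (2 * real n - 1) \<le> lam" and "lam \<le> (2 * real n - 1) * lam"
    using lam n mult_left_mono[of 1 "real n" lam] by (simp_all add: field_simps)
  ultimately have "odds_against e \<le> odds_against a"
    by linarith
  then have a_le_e: "a \<le> e"
    using pos by (simp add: odds_against_le_iff)
  have "odds_against a * odds_against (1 - q) \<le> odds_against a * odds_against (1 - 1 / (2 * real n))"
    using pos W small a_le_e by (intro mult_left_mono odds_against_nonneg) (auto simp: odds_against_le_iff)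
  then show "odds_against a * odds_against (1 - q) \<le> lam"
    using eq_a by simp
  have "odds_against q * odds_against (1 - a) \<le> odds_against q * odds_against (1 - W)"
    using pos W small a_le_e by (intro mult_left_mono odds_against_nonneg) (auto simp: odds_against_le_iff)
  then show "odds_against q * odds_against (1 - a) \<le> lam"
    using eq_q by simp
  have "1 / (2 * real n) \<le> 1 - W" "0 < 1 - W"
    using W small by linarith+
  then have "odds_against (1 - W) \<le> odds_against (1 / (2 * real n))"
    using n by (subst odds_against_le_iff) auto
  then have "odds_against e * odds_against (1 - W) \<le> odds_against e * odds_against (1 / (2 * real n))"
    using pos W small by (intro mult_left_mono odds_against_nonneg) auto
  then show "odds_against e * odds_against (1 - W) \<le> lam"
    using eq_e by simp
qed

text \<open>With a and e making relations 1a and 4b tight, W forced by the total mass and q chosen to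
  make relation 2b tight (q = W / c), the remaining condition W = e + 2(n - 1) q fails exactly
  by a multiple of P(lam).\<close>

lemma Ppoly_balance_defect:
  fixes n :: nat and lam :: real
  defines "N \<equiv> real n"
  defines "m \<equiv> 2 * N - 1" and "k \<equiv> N - 1"
  defines "D1 \<equiv> 1 + m * lam" and "D2 \<equiv> lam + m"
  defines "e \<equiv> m / D2" and "W \<equiv> m * (lam - 1) / (4 * N * k * D1)"
  defines "c \<equiv> lam - (lam - 1) * W"
  assumes nz: "N \<noteq> 0" "k \<noteq> 0" "D1 \<noteq> 0" "D2 \<noteq> 0"
  shows "(W - e) * c - 2 * k * W = m * Ppoly n lam / ((4 * N * k * D1)^2 * D2)"
proof -
  have "Ppoly n lam = ((lam - 1) * D2 - 4 * N * k * D1) * (4 * N * k * D1 * lam - m * (lam - 1)^2)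
      - 8 * N * k^2 * (lam - 1) * D1 * D2"
    unfolding Ppoly_def Let_def N_def m_def k_def D1_def D2_def by algebra
  then show ?thesis
    unfolding c_def W_def e_def using nz by (simp add: field_simps) algebra
qed

lemma balanced_parameters_exist:
  fixes n :: nat and lam :: real
  assumes n: "n \<ge> 2" and lam: "1 < lam" and root: "Ppoly n lam = 0"
  obtains a e q :: real where "0 < a" "0 < e" "0 < q"
    "a + 2 * (real n - 1) * (e + 2 * (real n - 1) * q) = 1 / (2 * real n)"
    "odds_against a * odds_against (1 - 1 / (2 * real n)) = lam"
    "odds_against e * odds_against (1 / (2 * real n)) = lam"
    "odds_against q * odds_against (1 - (e + 2 * (real n - 1) * q)) = lam"
proof -
  define N m k where "N = real n" and "m = 2 * N - 1" and "k = N - 1"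
  define D1 D2 where "D1 = 1 + m * lam" and "D2 = lam + m"
  define a e W where "a = 1 / D1" and "e = m / D2" and "W = m * (lam - 1) / (4 * N * k * D1)"
  define c where "c = lam - (lam - 1) * W"
  define q where "q = W / c"
  have N: "2 \<le> N" and m: "3 \<le> m" and k: "1 \<le> k" and D: "0 < D1" "0 < D2"
    using n lam by (simp_all add: N_def m_def k_def D1_def D2_def add_pos_pos)
  have "m * (lam - 1) < 1 * D1"
    using m by (simp add: D1_def algebra_simps)
  also have "\<dots> \<le> 4 * N * k * D1"
    using mult_mono[of 2 N 1 k] N k D by (intro mult_right_mono) auto
  finally have W: "0 < W" "W < 1"
    unfolding W_def using m lam N k D by (simp_all add: divide_less_eq)
  then have "0 < (lam - 1) * (1 - W)"
    using lam by simp
  then have c: "1 < c"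
    by (simp add: c_def algebra_simps)
  have pos: "0 < a" "0 < e" "0 < q"
    using D m W c by (simp_all add: a_def e_def q_def)
  have nz: "N \<noteq> 0" "k \<noteq> 0" "D1 \<noteq> 0" "D2 \<noteq> 0"
    using N k D by auto
  have total: "a + 2 * k * W = 1 / (2 * N)"
    unfolding a_def W_def using nz by (simp add: field_simps) (simp add: D1_def m_def algebra_simps)
  have "e + 2 * k * q = W"
    using Ppoly_balance_defect[of n lam, folded N_def, folded m_def k_def, folded D1_def D2_def,
        folded e_def W_def, folded c_def, OF nz] root c
    unfolding q_def by (simp add: field_simps)
  moreover have "odds_against q * odds_against (1 - W) = lam"
  proof -
    have "odds_against q = (c - W) / W"
      using W c by (simp add: odds_against_def q_def field_simps)
    moreover have "c - W = lam * (1 - W)"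
      by (simp add: c_def algebra_simps)
    ultimately show ?thesis
      using W by (simp add: odds_against_def)
  qed
  moreover have "odds_against a = D1 - 1" and "odds_against e = (D2 - m) / m"
    using D m by (simp_all add: odds_against_def a_def e_def field_simps)
  then have "odds_against a = m * lam" and "odds_against e = lam / m"
    by (simp_all add: D1_def D2_def)
  moreover have "odds_against (1 - 1 / (2 * N)) = 1 / m" and "odds_against (1 / (2 * N)) = m"
    using odds_against_reciprocal_2n[of n] n by (simp_all add: N_def m_def)
  ultimately show ?thesis
    using that pos total m unfolding N_def k_def by simp
qed

lemma exists_Gfun_le_root:
  assumes n: "n \<ge> 2" and lam: "1 < lam" and root: "Ppoly n lam = 0"
  shows "\<exists>x\<in>Delta n. Gfun n x \<le> lam"
proof -
  obtain a e q where pos: "0 < a" "0 < e" "0 < q"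
    and total: "a + 2 * (real n - 1) * (e + 2 * (real n - 1) * q) = 1 / (2 * real n)"
    and eq: "odds_against a * odds_against (1 - 1 / (2 * real n)) = lam"
      "odds_against e * odds_against (1 / (2 * real n)) = lam"
      "odds_against q * odds_against (1 - (e + 2 * (real n - 1) * q)) = lam"
    using balanced_parameters_exist[OF n lam root] by blast
  note le = odds_against_products_le[OF n pos total eq]
  let ?x = "sym_point a e q"
  have "sum ?x (Psi n) = 1"
    using total n by (simp add: sum_Psi_sym_point)
  then have "?x \<in> Delta n"
    using pos by (simp add: Delta_def sym_point_def)
  moreover have "relsG n \<noteq> {}"
    using relsF_nonempty[of n] relsF_subset_relsG[of n] n by auto
  moreover have "frel r ?x \<le> lam" if "r \<in> relsG n" for r
    using frel_sym_point[OF _ total that] n eq le by auto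
  ultimately show ?thesis
    unfolding Gfun_def by (intro bexI[of _ ?x]) auto
qed

section \<open>The root alpha\<close>

lemma reciprocal_sums_bounds:
  fixes M x y :: real
  assumes M: "0 < M" "M \<le> x" "M \<le> y"
  shows "M^2 \<le> x * y" and "M * (x + y) \<le> 2 * (x * y)"
    and "M^2 * (x^2 + x * y + y^2) \<le> 3 * (x * y)^2"
proof -
  have Mx: "M * x \<le> x * y" and My: "M * y \<le> x * y"
    using M by (simp_all add: mult_right_mono mult_left_mono mult.commute)
  show "M^2 \<le> x * y"
    using M mult_mono[of M x M y] by (simp add: power2_eq_square)
  then have "M^2 * (x * y) \<le> (x * y) * (x * y)"
    using M by (intro mult_right_mono) auto
  moreover have "(M * x)^2 \<le> (x * y)^2" "(M * y)^2 \<le> (x * y)^2"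
    using Mx My M by (simp_all add: power_mono)
  moreover have "M^2 * (x^2 + x * y + y^2) = (M * x)^2 + M^2 * (x * y) + (M * y)^2"
    by algebra
  ultimately show "M^2 * (x^2 + x * y + y^2) \<le> 3 * (x * y)^2"
    by (simp add: power2_eq_square)
  show "M * (x + y) \<le> 2 * (x * y)"
    using Mx My by (simp add: algebra_simps)
qed

text \<open>In other words, p(l) / l^3 is strictly increasing on [M, oo) for the quartic p.\<close>

lemma quartic_over_cube_strict_mono:
  fixes A B C D M l1 l2 :: real
  assumes M: "0 < M" "M \<le> l1" "l1 < l2" and A: "0 < A" and C: "C \<le> 0" and D: "0 \<le> D"
    and K: "0 < A * M^3 - 2 * D - 3 * M"
  shows "l2^3 * (A * l1^4 + B * l1^3 + C * l1^2 + D * l1 + M^2)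
       < l1^3 * (A * l2^4 + B * l2^3 + C * l2^2 + D * l2 + M^2)"
proof -
  define p where "p = l1 * l2"
  define b where "b = A * p^3 - C * p^2 - D * p * (l1 + l2) - M^2 * (l1^2 + l1 * l2 + l2^2)"
  have diff: "l1^3 * (A * l2^4 + B * l2^3 + C * l2^2 + D * l2 + M^2)
      - l2^3 * (A * l1^4 + B * l1^3 + C * l1^2 + D * l1 + M^2) = (l2 - l1) * b"
    unfolding b_def p_def by algebra
  have "M \<le> l2"
    using M by linarith
  note bounds = reciprocal_sums_bounds[OF M(1,2) this, folded p_def]
  have p: "0 < p"
    using bounds(1) zero_less_power[OF M(1), of 2] by linarith
  have "M * C * p^2 \<le> 0"
    using M C by (simp add: mult_nonneg_nonpos mult_nonpos_nonneg)
  moreover have "D * p * (M * (l1 + l2)) \<le> D * p * (2 * p)"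
    using bounds(2) M D p by (simp add: mult_left_mono)
  moreover have "M * (M^2 * (l1^2 + l1 * l2 + l2^2)) \<le> M * (3 * p^2)"
    using bounds(3) M by (simp add: mult_left_mono p_def)
  moreover have "M * b = A * M * p * p^2 - M * C * p^2 - D * p * (M * (l1 + l2))
      - M * (M^2 * (l1^2 + l1 * l2 + l2^2))"
    unfolding b_def by algebra
  ultimately have "p^2 * (A * M * p - 2 * D - 3 * M) \<le> M * b"
    by (simp add: algebra_simps power2_eq_square)
  moreover have "A * M^3 \<le> A * M * p"
    using mult_left_mono[OF bounds(1), of "A * M"] A M by (simp add: power2_eq_square power3_eq_cube)
  then have "0 < p^2 * (A * M * p - 2 * D - 3 * M)"
    using K p by simp
  ultimately have "0 < M * b"
    by linarith
  then have "0 < (l2 - l1) * b"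
    using M by (simp add: zero_less_mult_iff)
  with diff show ?thesis
    by linarith
qed

abbreviation Pcoeff4 :: "nat \<Rightarrow> real" where
  "Pcoeff4 n \<equiv> 8 * real n^3 - 12 * real n^2 + 2 * real n + 1"

abbreviation Pcoeff3 :: "nat \<Rightarrow> real" where
  "Pcoeff3 n \<equiv>
    -64 * real n^6 + 192 * real n^5 - 192 * real n^4 + 64 * real n^3 + 4 * real n^2 + 2 * real n - 4"

abbreviation Pcoeff2 :: "nat \<Rightarrow> real" where
  "Pcoeff2 n \<equiv> -96 * real n^5 + 224 * real n^4 - 168 * real n^3 + 52 * real n^2 - 18 * real n + 6"

abbreviation Pcoeff1 :: "nat \<Rightarrow> real" where
  "Pcoeff1 n \<equiv> 32 * real n^5 - 112 * real n^4 + 128 * real n^3 - 68 * real n^2 + 22 * real n - 4"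

lemma Ppoly_eq:
  "Ppoly n l = Pcoeff4 n * l^4 + Pcoeff3 n * l^3 + Pcoeff2 n * l^2 + Pcoeff1 n * l + ((2 * real n - 1)^2)^2"
  unfolding Ppoly_def Let_def by algebra

text \<open>Substituting n = t + 2 turns each polynomial in n below into one in t \<ge> 0 whose
  coefficients all have the same sign.\<close>

lemma Ppoly_coeff_signs:
  assumes "n \<ge> 2"
  shows "0 < Pcoeff4 n" and "Pcoeff2 n \<le> 0" and "0 \<le> Pcoeff1 n"
    and "0 < Pcoeff4 n * ((2 * real n - 1)^2)^3 - 2 * Pcoeff1 n - 3 * (2 * real n - 1)^2"
proof -
  define t where "t = real n - 2"
  have t: "0 \<le> t" "real n = t + 2"
    using assms by (simp_all add: t_def)
  have "Pcoeff4 n = 21 + 50*t + 36*t^2 + 8*t^3"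
    unfolding t(2) by algebra
  also have "0 < \<dots>"
    using t by (intro add_pos_nonneg mult_nonneg_nonneg zero_le_power) simp_all
  finally show "0 < Pcoeff4 n" .
  have "- Pcoeff2 n = 654 + 2338*t + 3260*t^2 + 2216*t^3 + 736*t^4 + 96*t^5"
    unfolding t(2) by algebra
  also have "0 < \<dots>"
    using t by (intro add_pos_nonneg mult_nonneg_nonneg zero_le_power) simp_all
  finally show "Pcoeff2 n \<le> 0"
    by simp
  have "Pcoeff1 n = 24 + 262*t + 572*t^2 + 512*t^3 + 208*t^4 + 32*t^5"
    unfolding t(2) by algebra
  also have "0 < \<dots>"
    using t by (intro add_pos_nonneg mult_nonneg_nonneg zero_le_power) simp_all
  finally show "0 \<le> Pcoeff1 n"
    by simp
  have "Pcoeff4 n * ((2 * real n - 1)^2)^3 - 2 * Pcoeff1 n - 3 * (2 * real n - 1)^2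
    = 15234 + 97126*t + 272948*t^2 + 443504*t^3 + 459232*t^4 + 314432*t^5 + 142464*t^6
      + 41216*t^7 + 6912*t^8 + 512*t^9"
    unfolding t(2) by algebra
  also have "0 < \<dots>"
    using t by (intro add_pos_nonneg mult_nonneg_nonneg zero_le_power) simp_all
  finally show "0 < Pcoeff4 n * ((2 * real n - 1)^2)^3 - 2 * Pcoeff1 n - 3 * (2 * real n - 1)^2" .
qed

lemma Ppoly_sign_change:
  assumes "n \<ge> 2"
  shows "Ppoly n ((2 * real n - 1)^2) < 0" and "0 < Ppoly n (8 * real n^3)"
proof -
  define t where "t = real n - 2"
  have t: "0 \<le> t" "real n = t + 2"
    using assms by (simp_all add: t_def)
  have "- Ppoly n ((2 * real n - 1)^2) = 276480 + 2377728*t + 9354240*t^2 + 22255616*t^3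
      + 35652480*t^4 + 40494464*t^5 + 33421184*t^6 + 20184192*t^7 + 8848128*t^8 + 2744320*t^9
      + 571392*t^10 + 71680*t^11 + 4096*t^12"
    unfolding Ppoly_def Let_def t(2) by algebra
  also have "0 < \<dots>"
    using t by (intro add_pos_nonneg mult_nonneg_nonneg zero_le_power) simp_all
  finally show "Ppoly n ((2 * real n - 1)^2) < 0"
    by simp
  have "Ppoly n (8 * real n^3) = 219620945 + 1750829912*t + 6425251480*t^2 + 14402822336*t^3
      + 22050518400*t^4 + 24408121312*t^5 + 20156380544*t^6 + 12621428736*t^7 + 6024542720*t^8
      + 2182266368*t^9 + 590699520*t^10 + 115896320*t^11 + 15585280*t^12 + 1286144*t^13
      + 49152*t^14"
    unfolding Ppoly_def Let_def t(2) by algebra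
  also have "0 < \<dots>"
    using t by (intro add_pos_nonneg mult_nonneg_nonneg zero_le_power) simp_all
  finally show "0 < Ppoly n (8 * real n^3)" .
qed

lemma Ppoly_pos_beyond_root:
  assumes n: "n \<ge> 2" and l: "(2 * real n - 1)^2 \<le> l1" "l1 < l2" and root: "Ppoly n l1 = 0"
  shows "0 < Ppoly n l2"
proof -
  have M: "0 < (2 * real n - 1)^2"
    using n by simp
  from quartic_over_cube_strict_mono[OF M l Ppoly_coeff_signs[OF n], of "Pcoeff3 n"]
  have "l2^3 * Ppoly n l1 < l1^3 * Ppoly n l2"
    unfolding Ppoly_eq .
  moreover have "0 < l1"
    using M l by linarith
  ultimately show ?thesis
    using root by (simp add: zero_less_mult_iff)
qed

lemma alpha_root:
  assumes n: "n \<ge> 2"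
  shows "(2 * real n - 1)^2 < alpha n" and "Ppoly n (alpha n) = 0"
proof -
  let ?M = "(2 * real n - 1)^2"
  have "?M \<le> (2 * real n)^2"
    using n by (intro power_mono) auto
  also have "\<dots> \<le> 8 * real n^3"
    using n by (simp add: power2_eq_square power3_eq_cube)
  finally have "?M \<le> 8 * real n^3" .
  moreover have "isCont (Ppoly n) x" for x
    unfolding Ppoly_def Let_def by (intro continuous_intros)
  ultimately obtain l where l: "?M \<le> l" "Ppoly n l = 0"
    using IVT[of "Ppoly n" ?M 0 "8 * real n^3"] Ppoly_sign_change[OF n] by force
  then have l_gt: "?M < l"
    using Ppoly_sign_change(1)[OF n] by (cases "l = ?M") auto
  have "\<exists>!l. ?M < l \<and> Ppoly n l = 0"
  proof (rule ex1I[of _ l])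
    fix y
    assume y: "?M < y \<and> Ppoly n y = 0"
    show "y = l"
      using Ppoly_pos_beyond_root[OF n _ _ l(2), of y] Ppoly_pos_beyond_root[OF n _ _, of y l] l l_gt y
      by (cases y l rule: linorder_cases) auto
  qed (use l l_gt in simp)
  then show "?M < alpha n" and "Ppoly n (alpha n) = 0"
    unfolding alpha_def by (metis (mono_tags, lifting) theI')+
qed

theorem lemma5p3:
  fixes n :: nat
  assumes "n \<ge> 2"
  shows "1 < (INF x\<in>Delta n. Ffun n x)
       \<and> (INF x\<in>Delta n. Ffun n x) \<le> (INF x\<in>Delta n. Gfun n x)
       \<and> (INF x\<in>Delta n. Gfun n x) \<le> alpha n"
proof -
  have "1 \<le> (2 * real n - 1)^2"
    using assms by simp
  then have "1 < alpha n"
    using alpha_root(1)[OF assms] by linarith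
  then obtain x0 where x0: "x0 \<in> Delta n" "Gfun n x0 \<le> alpha n"
    using exists_Gfun_le_root[OF assms _ alpha_root(2)[OF assms]] by blast
  have F_ge: "3/2 \<le> Ffun n x" and F_le_G: "Ffun n x \<le> Gfun n x" if "x \<in> Delta n" for x
    using Ffun_ge_three_halves[OF assms that] Ffun_le_Gfun assms by auto
  have G_ge: "3/2 \<le> Gfun n x" if "x \<in> Delta n" for x
    using F_ge F_le_G that by (meson order_trans)
  have ne: "Delta n \<noteq> {}"
    using x0 by blast
  have "3/2 \<le> (INF x\<in>Delta n. Ffun n x)"
    using ne F_ge by (rule cINF_greatest)
  moreover have "(INF x\<in>Delta n. Ffun n x) \<le> (INF x\<in>Delta n. Gfun n x)"
    using ne F_ge F_le_G by (intro cINF_mono bdd_belowI2[where m = "3/2"]) auto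
  moreover have "(INF x\<in>Delta n. Gfun n x) \<le> alpha n"
    using G_ge x0 by (intro cINF_lower2 bdd_belowI2[where m = "3/2"]) auto
  ultimately show ?thesis
    by linarith
qed

end
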